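(* Let $0<\mu<1$, $0\le\lambda<1$, and let $I_\theta$ be the function defined for $x\in(0,1)$ by $$I_\theta(x)=-x\log\left[\frac{\mu+\bar\mu\lambda}{1-2\bar x/(\sqrt\Delta+1)}\right]-\bar x\log\left[\frac{\bar\mu+\mu\lambda}{1-2x/(\sqrt\Delta+1)}\right],\qquad \Delta=1+\frac{4\lambda x\bar x}{\mu\bar\mu(1-\lambda)^2},$$ with $\bar\mu=1-\mu$, $\bar x=1-x$. Then for all $x\in(0,1)$, $$I_\theta(x)\ge 2\,\frac{1-\lambda}{1+\lambda}\,(x-\mu)^2.$$ Moreover, for $x\ne\mu$, the function $g(x)=I_\theta(x)/(x-\mu)^2$ attains its global minimum over $(0,1)\setminus\{\mu\}$ at $x=\bar\mu$ (when $\mu\neq1/2$). *)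

theory Defs
  imports Complex_Main
begin

definition Delta_theta :: "real \<Rightarrow> real \<Rightarrow> real \<Rightarrow> real" where
  "Delta_theta mu lam x = 1 + 4 * lam * x * (1 - x) / (mu * (1 - mu) * (1 - lam)^2)"

definition I_theta :: "real \<Rightarrow> real \<Rightarrow> real \<Rightarrow> real" where
  "I_theta mu lam x =
     - x * ln ((mu + (1 - mu) * lam) / (1 - 2 * (1 - x) / (sqrt (Delta_theta mu lam x) + 1)))
     - (1 - x) * ln (((1 - mu) + mu * lam) / (1 - 2 * x / (sqrt (Delta_theta mu lam x) + 1)))"

end

theory Submission
  imports Defs "HOL-Analysis.Analysis"
begin

(* With s = sqrt Delta, the rate function I_theta vanishes together with its derivative at mu, and
   its second derivative 1 / (s x (1 - x)) grows with the distance |x - 1/2|.  For mu = 1/2 it is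
   therefore at least its value 4 (1 - lam) / (1 + lam) at mu, and the bound follows by convexity.
   Otherwise let K = I_theta (1 - mu) / (1 - 2 mu)^2.  Then f x = I_theta x - K (x - mu)^2 vanishes
   to second order at both mu and 1 - mu, and f'' is again monotone in |x - 1/2|.  Such an f is
   nonnegative: Rolle's theorem gives a zero of f'' between mu and 1 - mu, so f is convex farther
   out, and a negative value of f between mu and 1 - mu would make f'' negative, positive and
   negative again there, which the monotonicity rules out.  This shows that K is the minimum of
   I_theta x / (x - mu)^2, and the quadratic bound follows from K >= 2 (1 - lam) / (1 + lam), which
   is the inequality artanh z >= z for z = (1 - lam) (1 - 2 mu) / (1 + lam). *)

lemma second_deriv_nonneg_imp_above_tangent:
  fixes f f' f'' :: "real \<Rightarrow> real"
  assumes f': "\<And>t. l < t \<Longrightarrow> t < r \<Longrightarrow> (f has_real_derivative f' t) (at t)"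
    and f'': "\<And>t. l < t \<Longrightarrow> t < r \<Longrightarrow> (f' has_real_derivative f'' t) (at t)"
    and nonneg: "\<And>t. l < t \<Longrightarrow> t < r \<Longrightarrow> f'' t \<ge> 0"
    and c: "l < c" "c < r" and x: "l < x" "x < r"
  shows "f x \<ge> f c + f' c * (x - c)"
proof -
  have "convex_on {l<..<r} f"
    using f' f'' nonneg by (intro f''_ge0_imp_convex) auto
  moreover have "(f has_real_derivative f' c) (at c within {l<..<r})"
    using f' c by (simp add: has_field_derivative_at_within)
  ultimately have "f x - f c \<ge> f' c * (x - c)"
    using c x by (intro convex_on_imp_above_tangent) auto
  then show ?thesis by simp
qed

lemma nonneg_between_double_zeros:
  fixes f f' f'' :: "real \<Rightarrow> real"
  assumes f': "\<And>t. a \<le> t \<Longrightarrow> t \<le> b \<Longrightarrow> (f has_real_derivative f' t) (at t)"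
    and f'': "\<And>t. a \<le> t \<Longrightarrow> t \<le> b \<Longrightarrow> (f' has_real_derivative f'' t) (at t)"
    and zeros: "f a = 0" "f b = 0" "f' a = 0" "f' b = 0"
    and quasiconvex: "\<And>p q s. a < p \<Longrightarrow> p < q \<Longrightarrow> q < s \<Longrightarrow> s < b \<Longrightarrow> f'' q \<le> max (f'' p) (f'' s)"
    and x: "a \<le> x" "x \<le> b"
  shows "f x \<ge> 0"
proof (rule ccontr)
  assume "\<not> f x \<ge> 0"
  then have neg: "f x < 0" by simp
  with zeros x have ax: "a < x" and xb: "x < b" by (auto simp: order_le_less)
  obtain e1 where e1: "a < e1" "e1 < x" "f x - f a = (x - a) * f' e1"
    using MVT2[OF ax, of f f'] f' xb by auto
  obtain e2 where e2: "x < e2" "e2 < b" "f b - f x = (b - x) * f' e2"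
    using MVT2[OF xb, of f f'] f' ax by auto
  have "(x - a) * f' e1 < 0" using e1 neg zeros by linarith
  then have "f' e1 < 0" using e1 by (simp add: mult_less_0_iff)
  have "(b - x) * f' e2 > 0" using e2 neg zeros by linarith
  then have "f' e2 > 0" using e2 by (simp add: zero_less_mult_iff)
  obtain p where p: "a < p" "p < e1" "f' e1 - f' a = (e1 - a) * f'' p"
    using MVT2[OF e1(1), of f' f''] f'' e1 xb by auto
  obtain q where q: "e1 < q" "q < e2" "f' e2 - f' e1 = (e2 - e1) * f'' q"
    using MVT2[of e1 e2 f' f''] f'' e1 e2 by auto
  obtain s where s: "e2 < s" "s < b" "f' b - f' e2 = (b - e2) * f'' s"
    using MVT2[OF e2(2), of f' f''] f'' e2 ax by auto
  have "(e1 - a) * f'' p < 0" using p \<open>f' e1 < 0\<close> zeros by linarith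
  then have "f'' p < 0" using p by (simp add: mult_less_0_iff)
  have "(e2 - e1) * f'' q > 0" using q \<open>f' e1 < 0\<close> \<open>f' e2 > 0\<close> by linarith
  then have "f'' q > 0" using q by (simp add: zero_less_mult_iff)
  have "(b - e2) * f'' s < 0" using s \<open>f' e2 > 0\<close> zeros by linarith
  then have "f'' s < 0" using s by (simp add: mult_less_0_iff)
  have "f'' q \<le> max (f'' p) (f'' s)"
    using quasiconvex p q s e1 e2 by simp
  with \<open>f'' p < 0\<close> \<open>f'' q > 0\<close> \<open>f'' s < 0\<close> show False by linarith
qed

lemma nonneg_of_double_zeros_symmetric:
  fixes f f' f'' :: "real \<Rightarrow> real"
  assumes f': "\<And>t. l < t \<Longrightarrow> t < r \<Longrightarrow> (f has_real_derivative f' t) (at t)"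
    and f'': "\<And>t. l < t \<Longrightarrow> t < r \<Longrightarrow> (f' has_real_derivative f'' t) (at t)"
    and interval: "l < m - d" "0 < d" "m + d < r"
    and zeros: "f (m - d) = 0" "f (m + d) = 0" "f' (m - d) = 0" "f' (m + d) = 0"
    and mono: "\<And>p q. l < p \<Longrightarrow> p < r \<Longrightarrow> l < q \<Longrightarrow> q < r \<Longrightarrow> \<bar>q - m\<bar> \<le> \<bar>p - m\<bar> \<Longrightarrow> f'' q \<le> f'' p"
    and x: "l < x" "x < r"
  shows "f x \<ge> 0"
proof -
  obtain \<xi> where \<xi>: "m - d < \<xi>" "\<xi> < m + d" "f' (m + d) - f' (m - d) = (m + d - (m - d)) * f'' \<xi>"
    using MVT2[of "m - d" "m + d" f' f''] f'' interval by auto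
  have "f'' \<xi> = 0" using \<xi>(3) zeros interval by simp
  define \<delta> where "\<delta> = \<bar>\<xi> - m\<bar>"
  have "0 \<le> \<delta>" "\<delta> < d" using \<xi> by (auto simp: \<delta>_def)
  have convex_outside: "f'' t \<ge> 0" if "l < t" "t < r" "\<delta> \<le> \<bar>t - m\<bar>" for t
    using mono[of t \<xi>] that \<xi> interval \<open>f'' \<xi> = 0\<close> by (simp add: \<delta>_def)
  consider "x \<le> m - d" | "m + d \<le> x" | "m - d \<le> x" "x \<le> m + d" by linarith
  then show ?thesis
  proof cases
    case 1
    have "f x \<ge> f (m - d) + f' (m - d) * (x - (m - d))"
      using 1 x interval \<open>0 \<le> \<delta>\<close> \<open>\<delta> < d\<close>
      by (intro second_deriv_nonneg_imp_above_tangent[of "l" "m - \<delta>" f f' f''] f' f'' convex_outside) auto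
    then show ?thesis using zeros by simp
  next
    case 2
    have "f x \<ge> f (m + d) + f' (m + d) * (x - (m + d))"
      using 2 x interval \<open>0 \<le> \<delta>\<close> \<open>\<delta> < d\<close>
      by (intro second_deriv_nonneg_imp_above_tangent[of "m + \<delta>" r f f' f''] f' f'' convex_outside) auto
    then show ?thesis using zeros by simp
  next
    case 3
    have "f'' q \<le> max (f'' p) (f'' s)"
      if "m - d < p" "p < q" "q < s" "s < m + d" for p q s
    proof -
      have "\<bar>q - m\<bar> \<le> \<bar>p - m\<bar> \<or> \<bar>q - m\<bar> \<le> \<bar>s - m\<bar>" using that by linarith
      then show ?thesis using mono[of p q] mono[of s q] that interval by fastforce
    qed
    then show ?thesis
      using 3 f' f'' zeros interval
      by (intro nonneg_between_double_zeros[of "m - d" "m + d" f f' f'']) auto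
  qed
qed

lemma artanh_ge_self:
  fixes z :: real
  assumes "0 \<le> z" "z < 1"
  shows "z \<le> artanh z"
proof (cases "z = 0")
  case False
  have "(artanh has_real_derivative 1 / (1 - t^2)) (at t)" if "0 \<le> t" "t \<le> z" for t
    using that assms by (intro artanh_real_has_field_derivative) auto
  then obtain \<xi> where \<xi>: "0 < \<xi>" "\<xi> < z" "artanh z - artanh 0 = (z - 0) * (1 / (1 - \<xi>^2))"
    using MVT2[of 0 z artanh "\<lambda>t. 1 / (1 - t^2)"] assms False by auto
  have "\<xi>^2 < 1" using \<xi> assms by (simp add: abs_square_less_1)
  then have "1 \<le> 1 / (1 - \<xi>^2)" using \<xi> by simp
  then show ?thesis using \<xi> mult_left_mono[of 1 "1 / (1 - \<xi>^2)" z] by simp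
qed simp

lemma square_le_mult_artanh:
  fixes z :: real
  assumes "\<bar>z\<bar> < 1"
  shows "z^2 \<le> z * artanh z"
proof (cases "0 \<le> z")
  case True
  then show ?thesis
    using assms artanh_ge_self[of z] mult_left_mono[of z "artanh z" z] by (simp add: power2_eq_square)
next
  case False
  then have "- z \<le> artanh (- z)" using assms by (intro artanh_ge_self) auto
  then show ?thesis
    using assms False mult_left_mono[of "- z" "artanh (- z)" "- z"] by (simp add: power2_eq_square)
qed

lemma log_expansion_has_deriv:
  fixes S :: "real \<Rightarrow> real"
  assumes S': "(S has_real_derivative k * (1 - 2 * x) / (2 * S x)) (at x)"
    and S: "(S x)^2 = 1 + k * (x * (1 - x))" "1 \<le> S x" and x: "0 < x" "x < 1"
  shows "((\<lambda>t. t * ln (S t - 1 + 2 * t) + (1 - t) * ln (S t + 1 - 2 * t) - ln (S t + 1))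
    has_real_derivative ln (S x - 1 + 2 * x) - ln (S x + 1 - 2 * x)) (at x)"
proof -
  define d where "d = k * (1 - 2 * x) / (2 * S x)"
  have pos: "0 < S x - 1 + 2 * x" "0 < S x + 1 - 2 * x" "0 < S x + 1" using S x by auto
  have cancel: "x * (d + 2) / (S x - 1 + 2 * x) + (1 - x) * (d - 2) / (S x + 1 - 2 * x) - d / (S x + 1) = 0"
  proof -
    have "(S x - 1 + 2 * x) * (S x + 1 - 2 * x) \<noteq> 0" using pos by simp
    then have "S x * S x + x * 4 - (1 + x * (x * 4)) \<noteq> 0" by (simp add: algebra_simps)
    moreover have "d * (2 * S x) = k * (1 - 2 * x)" using S by (simp add: d_def)
    ultimately show ?thesis using pos S by (simp add: field_simps) algebra
  qed
  have "((\<lambda>t. t * ln (S t - 1 + 2 * t) + (1 - t) * ln (S t + 1 - 2 * t) - ln (S t + 1))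
    has_real_derivative ln (S x - 1 + 2 * x) - ln (S x + 1 - 2 * x)
      + (x * (d + 2) / (S x - 1 + 2 * x) + (1 - x) * (d - 2) / (S x + 1 - 2 * x) - d / (S x + 1))) (at x)"
    using S' pos unfolding d_def[symmetric]
    by (auto intro!: derivative_eq_intros simp: algebra_simps diff_divide_distrib add_divide_distrib)
  then show ?thesis unfolding cancel by simp
qed

lemma log_ratio_has_deriv:
  fixes S :: "real \<Rightarrow> real"
  assumes S': "(S has_real_derivative k * (1 - 2 * x) / (2 * S x)) (at x)"
    and S: "(S x)^2 = 1 + k * (x * (1 - x))" "1 \<le> S x" and x: "0 < x" "x < 1"
  shows "((\<lambda>t. ln (S t - 1 + 2 * t) - ln (S t + 1 - 2 * t))
    has_real_derivative 1 / (S x * (x * (1 - x)))) (at x)"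
proof -
  define d where "d = k * (1 - 2 * x) / (2 * S x)"
  have pos: "0 < S x - 1 + 2 * x" "0 < S x + 1 - 2 * x" using S x by auto
  have "(d + 2) / (S x - 1 + 2 * x) - (d - 2) / (S x + 1 - 2 * x) = 1 / (S x * (x * (1 - x)))"
  proof -
    have "S x - 1 + 2 * x \<noteq> 0" "S x + 1 - 2 * x \<noteq> 0" "S x \<noteq> 0" "x \<noteq> 0" "1 - x \<noteq> 0"
      using S x by auto
    moreover have "d * (2 * S x) = k * (1 - 2 * x)" using S by (simp add: d_def)
    ultimately show ?thesis using S(1) by (simp add: field_simps) algebra
  qed
  moreover have "((\<lambda>t. ln (S t - 1 + 2 * t) - ln (S t + 1 - 2 * t))
    has_real_derivative (d + 2) / (S x - 1 + 2 * x) - (d - 2) / (S x + 1 - 2 * x)) (at x)"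
    using S' pos unfolding d_def[symmetric] by (auto intro!: derivative_eq_intros)
  ultimately show ?thesis by simp
qed

context
  fixes mu lam :: real
  assumes mu: "0 < mu" "mu < 1" and lam: "0 \<le> lam" "lam < 1"
begin

definition Delta_coeff :: real
  where "Delta_coeff = 4 * lam / (mu * (1 - mu) * (1 - lam)^2)"

definition root_Delta :: "real \<Rightarrow> real"
  where "root_Delta x = sqrt (Delta_theta mu lam x)"

lemma Delta_theta_eq: "Delta_theta mu lam x = 1 + Delta_coeff * (x * (1 - x))"
  unfolding Delta_theta_def Delta_coeff_def using mu lam by (simp add: field_simps)

lemma Delta_theta_ge_1:
  assumes "0 \<le> x" "x \<le> 1"
  shows "1 \<le> Delta_theta mu lam x"
proof -
  have "0 \<le> Delta_coeff" unfolding Delta_coeff_def using mu lam by simp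
  then show ?thesis unfolding Delta_theta_eq using assms by simp
qed

lemma root_Delta_square:
  assumes "0 < x" "x < 1"
  shows "(root_Delta x)^2 = 1 + Delta_coeff * (x * (1 - x))" and "1 \<le> root_Delta x"
  using Delta_theta_ge_1[of x] assms unfolding root_Delta_def by (simp_all add: Delta_theta_eq)

lemma root_Delta_mu: "root_Delta mu = (1 + lam) / (1 - lam)" "root_Delta (1 - mu) = (1 + lam) / (1 - lam)"
proof -
  have "Delta_theta mu lam mu = 1 + 4 * lam / (1 - lam)^2"
    unfolding Delta_theta_def using mu lam by (simp add: field_simps)
  also have "\<dots> = ((1 - lam)^2 + 4 * lam) / (1 - lam)^2"
    using lam by (simp add: add_divide_distrib)
  also have "\<dots> = ((1 + lam) / (1 - lam))^2"
    by (simp add: power_divide power2_eq_square algebra_simps)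
  finally have "Delta_theta mu lam mu = ((1 + lam) / (1 - lam))^2" .
  moreover have "Delta_theta mu lam (1 - mu) = Delta_theta mu lam mu"
    unfolding Delta_theta_def by (simp add: algebra_simps)
  ultimately show "root_Delta mu = (1 + lam) / (1 - lam)" "root_Delta (1 - mu) = (1 + lam) / (1 - lam)"
    unfolding root_Delta_def using lam by simp_all
qed

lemma root_Delta_has_deriv:
  assumes "0 < x" "x < 1"
  shows "(root_Delta has_real_derivative Delta_coeff * (1 - 2 * x) / (2 * root_Delta x)) (at x)"
proof -
  have "0 < 1 + Delta_coeff * (x * (1 - x))" using Delta_theta_ge_1[of x] assms by (simp add: Delta_theta_eq)
  then show ?thesis unfolding root_Delta_def[abs_def] Delta_theta_eq
    by (auto intro!: derivative_eq_intros simp: field_simps)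
qed

lemma mixture_pos: "0 < mu + (1 - mu) * lam" "0 < (1 - mu) + mu * lam"
  using mu lam by (simp_all add: add_pos_nonneg)

lemma I_theta_log_expansion:
  assumes "0 < x" "x < 1"
  shows "I_theta mu lam x = x * ln (root_Delta x - 1 + 2 * x) + (1 - x) * ln (root_Delta x + 1 - 2 * x)
    - ln (root_Delta x + 1) - (x * ln (mu + (1 - mu) * lam) + (1 - x) * ln ((1 - mu) + mu * lam))"
proof -
  define s a b where "s = root_Delta x" and "a = mu + (1 - mu) * lam" and "b = (1 - mu) + mu * lam"
  have "1 \<le> s" using root_Delta_square[of x] assms by (simp add: s_def)
  then have pos: "0 < s - 1 + 2 * x" "0 < s + 1 - 2 * x" "0 < s + 1" using assms by auto
  have "0 < a" "0 < b" using mixture_pos by (simp_all add: a_def b_def)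
  have l1: "ln (a / ((s - 1 + 2 * x) / (s + 1))) = ln a - ln (s - 1 + 2 * x) + ln (s + 1)"
    and l2: "ln (b / ((s + 1 - 2 * x) / (s + 1))) = ln b - ln (s + 1 - 2 * x) + ln (s + 1)"
    using pos \<open>0 < a\<close> \<open>0 < b\<close> by (simp_all add: ln_div ln_mult)
  have "1 - 2 * (1 - x) / (s + 1) = (s - 1 + 2 * x) / (s + 1)"
    and "1 - 2 * x / (s + 1) = (s + 1 - 2 * x) / (s + 1)"
    using pos by (simp_all add: field_simps)
  then have "I_theta mu lam x = - x * ln (a / ((s - 1 + 2 * x) / (s + 1)))
      - (1 - x) * ln (b / ((s + 1 - 2 * x) / (s + 1)))"
    unfolding I_theta_def s_def a_def b_def root_Delta_def by simp
  also have "\<dots> = - x * (ln a - ln (s - 1 + 2 * x) + ln (s + 1))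
      - (1 - x) * (ln b - ln (s + 1 - 2 * x) + ln (s + 1))"
    by (simp only: l1 l2)
  finally show ?thesis unfolding s_def[symmetric] a_def[symmetric] b_def[symmetric]
    by (simp add: algebra_simps)
qed

definition I_theta_deriv :: "real \<Rightarrow> real"
  where "I_theta_deriv x = ln (root_Delta x - 1 + 2 * x) - ln (root_Delta x + 1 - 2 * x)
    - (ln (mu + (1 - mu) * lam) - ln ((1 - mu) + mu * lam))"

definition I_theta_deriv2 :: "real \<Rightarrow> real"
  where "I_theta_deriv2 x = 1 / (root_Delta x * (x * (1 - x)))"

lemma I_theta_has_deriv:
  assumes x: "0 < x" "x < 1"
  shows "(I_theta mu lam has_real_derivative I_theta_deriv x) (at x)"
proof -
  have "((\<lambda>t. t * ln (mu + (1 - mu) * lam) + (1 - t) * ln ((1 - mu) + mu * lam))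
      has_real_derivative ln (mu + (1 - mu) * lam) - ln ((1 - mu) + mu * lam)) (at x)"
    by (auto intro!: derivative_eq_intros)
  from DERIV_diff[OF log_expansion_has_deriv[OF root_Delta_has_deriv[OF x] root_Delta_square[OF x] x] this]
  have "((\<lambda>t. t * ln (root_Delta t - 1 + 2 * t) + (1 - t) * ln (root_Delta t + 1 - 2 * t)
      - ln (root_Delta t + 1) - (t * ln (mu + (1 - mu) * lam) + (1 - t) * ln ((1 - mu) + mu * lam)))
    has_real_derivative I_theta_deriv x) (at x)"
    unfolding I_theta_deriv_def .
  then show ?thesis
    by (rule has_field_derivative_transform_within_open[of _ _ _ "{0<..<1}"])
       (use x I_theta_log_expansion in auto)
qed

lemma I_theta_deriv_has_deriv:
  assumes x: "0 < x" "x < 1"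
  shows "(I_theta_deriv has_real_derivative I_theta_deriv2 x) (at x)"
  using DERIV_diff[OF log_ratio_has_deriv[OF root_Delta_has_deriv[OF x] root_Delta_square[OF x] x] DERIV_const]
  unfolding I_theta_deriv_def[abs_def] I_theta_deriv2_def by simp

lemma I_theta_at_mu: "I_theta mu lam mu = 0" "I_theta_deriv mu = 0"
proof -
  define a b c where "a = mu + (1 - mu) * lam" and "b = (1 - mu) + mu * lam" and "c = 2 / (1 - lam)"
  have "0 < a" "0 < b" "0 < c" using mixture_pos lam by (simp_all add: a_def b_def c_def)
  have r: "sqrt (Delta_theta mu lam mu) + 1 = c"
    using root_Delta_mu lam unfolding root_Delta_def c_def by (simp add: field_simps)
  have "1 - 2 * (1 - mu) / c = a" "1 - 2 * mu / c = b"
    using lam by (simp_all add: a_def b_def c_def field_simps)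
  then show "I_theta mu lam mu = 0" using \<open>0 < a\<close> \<open>0 < b\<close>
    unfolding I_theta_def r a_def[symmetric] b_def[symmetric] by simp
  have "root_Delta mu - 1 + 2 * mu = c * a" "root_Delta mu + 1 - 2 * mu = c * b"
    using r unfolding root_Delta_def using lam by (simp_all add: a_def b_def c_def field_simps)
  then show "I_theta_deriv mu = 0" using \<open>0 < a\<close> \<open>0 < b\<close> \<open>0 < c\<close>
    unfolding I_theta_deriv_def a_def[symmetric] b_def[symmetric] by (simp add: ln_mult)
qed

lemma I_theta_at_reflection:
  "I_theta mu lam (1 - mu) = (1 - 2 * mu) * ln (((1 - mu) + mu * lam) / (mu + (1 - mu) * lam))"
  "I_theta_deriv (1 - mu) = 2 * ln (((1 - mu) + mu * lam) / (mu + (1 - mu) * lam))"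
proof -
  define a b c where "a = mu + (1 - mu) * lam" and "b = (1 - mu) + mu * lam" and "c = 2 / (1 - lam)"
  have "0 < a" "0 < b" "0 < c" using mixture_pos lam by (simp_all add: a_def b_def c_def)
  have r: "sqrt (Delta_theta mu lam (1 - mu)) + 1 = c"
    using root_Delta_mu lam unfolding root_Delta_def c_def by (simp add: field_simps)
  have "1 - 2 * (1 - (1 - mu)) / c = b" "1 - 2 * (1 - mu) / c = a"
    using lam by (simp_all add: a_def b_def c_def field_simps)
  then have "I_theta mu lam (1 - mu) = - (1 - mu) * ln (a / b) - mu * ln (b / a)"
    unfolding I_theta_def r a_def[symmetric] b_def[symmetric] by simp
  also have "\<dots> = (1 - 2 * mu) * ln (b / a)"
    using \<open>0 < a\<close> \<open>0 < b\<close> by (simp add: ln_div algebra_simps)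
  finally show "I_theta mu lam (1 - mu) = (1 - 2 * mu) * ln (b / a)" .
  have "root_Delta (1 - mu) - 1 + 2 * (1 - mu) = c * b" "root_Delta (1 - mu) + 1 - 2 * (1 - mu) = c * a"
    using r unfolding root_Delta_def using lam by (simp_all add: a_def b_def c_def field_simps)
  then show "I_theta_deriv (1 - mu) = 2 * ln (b / a)" using \<open>0 < a\<close> \<open>0 < b\<close> \<open>0 < c\<close>
    unfolding I_theta_deriv_def a_def[symmetric] b_def[symmetric] by (simp add: ln_mult ln_div)
qed

lemma I_theta_deriv2_mono:
  assumes "0 < p" "p < 1" "0 < q" "q < 1" "\<bar>q - 1/2\<bar> \<le> \<bar>p - 1/2\<bar>"
  shows "I_theta_deriv2 q \<le> I_theta_deriv2 p"
proof -
  have "(q - 1/2)^2 \<le> (p - 1/2)^2" using assms(5) by (simp add: abs_le_square_iff)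
  then have y: "p * (1 - p) \<le> q * (1 - q)" by (simp add: power2_eq_square algebra_simps)
  have "0 \<le> Delta_coeff" unfolding Delta_coeff_def using mu lam by simp
  then have "root_Delta p \<le> root_Delta q"
    unfolding root_Delta_def Delta_theta_eq using y by (simp add: mult_left_mono)
  then have "root_Delta p * (p * (1 - p)) \<le> root_Delta q * (q * (1 - q))"
    using assms root_Delta_square(2)[of q] by (intro mult_mono[OF _ y]) auto
  moreover have "0 < root_Delta p * (p * (1 - p))"
    using assms root_Delta_square(2)[of p] by simp
  ultimately show ?thesis unfolding I_theta_deriv2_def by (intro divide_left_mono) auto
qed

lemma I_theta_deriv2_mu: "I_theta_deriv2 mu = (1 - lam) / ((1 + lam) * (mu * (1 - mu)))"
  unfolding I_theta_deriv2_def root_Delta_mu using lam by (simp add: field_simps)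

lemma I_theta_ge_quadratic_at_half:
  assumes "mu = 1/2" "0 < x" "x < 1"
  shows "2 * ((1 - lam) / (1 + lam)) * (x - mu)^2 \<le> I_theta mu lam x"
proof -
  define c where "c = (1 - lam) / (1 + lam)"
  have "mu * (1 - mu) = 1/4" unfolding \<open>mu = 1/2\<close> by simp
  then have "I_theta_deriv2 mu = 4 * c" unfolding I_theta_deriv2_mu c_def by (simp only:) simp
  moreover have "\<bar>mu - 1/2\<bar> \<le> \<bar>t - 1/2\<bar>" for t unfolding \<open>mu = 1/2\<close> by simp
  ultimately have convex: "0 \<le> I_theta_deriv2 t - 2 * (2 * c)" if "0 < t" "t < 1" for t
    using I_theta_deriv2_mono[of t mu] that mu by simp
  have "I_theta mu lam mu - 2 * c * (mu - mu)^2 + (I_theta_deriv mu - 2 * (2 * c) * (mu - mu)) * (x - mu)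
      \<le> I_theta mu lam x - 2 * c * (x - mu)^2"
    using mu assms convex I_theta_has_deriv I_theta_deriv_has_deriv
    by (intro second_deriv_nonneg_imp_above_tangent[of 0 1 _ "\<lambda>t. I_theta_deriv t - 2 * (2 * c) * (t - mu)"
          "\<lambda>t. I_theta_deriv2 t - 2 * (2 * c)"]) (auto intro!: derivative_eq_intros)
  then show ?thesis using I_theta_at_mu by (simp add: c_def)
qed

definition reflection_coeff :: real
  where "reflection_coeff = ln (((1 - mu) + mu * lam) / (mu + (1 - mu) * lam)) / (1 - 2 * mu)"

lemma I_theta_quotient_at_reflection:
  assumes "mu \<noteq> 1/2"
  shows "I_theta mu lam (1 - mu) / ((1 - mu) - mu)^2 = reflection_coeff"
  using assms unfolding I_theta_at_reflection reflection_coeff_def by (simp add: power2_eq_square)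

lemma I_theta_ge_reflection_quadratic:
  assumes "mu \<noteq> 1/2" "0 < x" "x < 1"
  shows "reflection_coeff * (x - mu)^2 \<le> I_theta mu lam x"
proof -
  define L where "L = ln (((1 - mu) + mu * lam) / (mu + (1 - mu) * lam))"
  define K where "K = reflection_coeff"
  define f f' f'' where "f t = I_theta mu lam t - K * (t - mu)^2"
    and "f' t = I_theta_deriv t - 2 * K * (t - mu)" and "f'' t = I_theta_deriv2 t - 2 * K" for t
  have "K * (1 - 2 * mu) = L" using assms by (simp add: K_def reflection_coeff_def L_def)
  moreover have "f (1 - mu) = (1 - 2 * mu) * (L - K * (1 - 2 * mu))"
    unfolding f_def I_theta_at_reflection(1)[folded L_def] by (simp add: power2_eq_square algebra_simps)
  moreover have "f' (1 - mu) = 2 * (L - K * (1 - 2 * mu))"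
    unfolding f'_def I_theta_at_reflection(2)[folded L_def] by (simp add: algebra_simps)
  ultimately have double_zeros: "f mu = 0" "f' mu = 0" "f (1 - mu) = 0" "f' (1 - mu) = 0"
    using I_theta_at_mu by (simp_all add: f_def f'_def)
  have "0 \<le> f x"
  proof (rule nonneg_of_double_zeros_symmetric[of 0 1 f f' f'' "1/2" "\<bar>1/2 - mu\<bar>"])
    show "(f has_real_derivative f' t) (at t)" "(f' has_real_derivative f'' t) (at t)"
      if "0 < t" "t < 1" for t
      using I_theta_has_deriv[OF that] I_theta_deriv_has_deriv[OF that]
      unfolding f_def[abs_def] f'_def[abs_def] f''_def by (auto intro!: derivative_eq_intros)
    show "f'' q \<le> f'' p" if "0 < p" "p < 1" "0 < q" "q < 1" "\<bar>q - 1/2\<bar> \<le> \<bar>p - 1/2\<bar>" for p q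
      using I_theta_deriv2_mono[OF that] by (simp add: f''_def)
    show "f (1/2 - \<bar>1/2 - mu\<bar>) = 0" "f (1/2 + \<bar>1/2 - mu\<bar>) = 0"
      "f' (1/2 - \<bar>1/2 - mu\<bar>) = 0" "f' (1/2 + \<bar>1/2 - mu\<bar>) = 0"
      using double_zeros by (auto simp: abs_if)
  qed (use mu assms in \<open>auto simp: abs_if\<close>)
  then show ?thesis by (simp add: f_def K_def)
qed

lemma reflection_coeff_ge:
  assumes "mu \<noteq> 1/2"
  shows "2 * ((1 - lam) / (1 + lam)) \<le> reflection_coeff"
proof -
  define a b where "a = mu + (1 - mu) * lam" and "b = (1 - mu) + mu * lam"
  define c z where "c = (1 - lam) / (1 + lam)" and "z = c * (1 - 2 * mu)"
  have "0 < c" "c \<le> 1" using lam by (auto simp: c_def)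
  have "z \<noteq> 0" using assms \<open>0 < c\<close> by (simp add: z_def)
  have "\<bar>z\<bar> < 1"
  proof -
    have "\<bar>1 - 2 * mu\<bar> < 1" using mu by auto
    then have "\<bar>z\<bar> < 1 * 1"
      unfolding z_def abs_mult using \<open>0 < c\<close> \<open>c \<le> 1\<close> by (intro mult_le_less_imp_less) auto
    then show ?thesis by simp
  qed
  have "1 + z = 2 * b / (1 + lam)" "1 - z = 2 * a / (1 + lam)"
    using lam by (simp_all add: a_def b_def z_def c_def field_simps)
  then have "ln (b / a) = 2 * artanh z"
    using lam by (simp add: artanh_def)
  moreover have "1 - 2 * mu = z / c" using \<open>0 < c\<close> by (simp add: z_def)
  ultimately have "reflection_coeff = 2 * c * (artanh z / z)"
    by (simp add: reflection_coeff_def a_def b_def)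
  moreover have "1 \<le> artanh z / z"
  proof -
    have "z^2 \<le> z * artanh z" using square_le_mult_artanh \<open>\<bar>z\<bar> < 1\<close> .
    then have "1 \<le> z * artanh z / z^2" using \<open>z \<noteq> 0\<close> by simp
    then show ?thesis using \<open>z \<noteq> 0\<close> by (simp add: power2_eq_square)
  qed
  then have "2 * c * 1 \<le> 2 * c * (artanh z / z)" using \<open>0 < c\<close> by (intro mult_left_mono) auto
  ultimately show ?thesis by (simp add: c_def)
qed

lemma I_theta_ge_quadratic:
  assumes "0 < x" "x < 1"
  shows "2 * ((1 - lam) / (1 + lam)) * (x - mu)^2 \<le> I_theta mu lam x"
proof (cases "mu = 1/2")
  case True
  then show ?thesis using I_theta_ge_quadratic_at_half assms by blast
next
  case False
  then have "2 * ((1 - lam) / (1 + lam)) * (x - mu)^2 \<le> reflection_coeff * (x - mu)^2"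
    using reflection_coeff_ge by (intro mult_right_mono) auto
  also have "\<dots> \<le> I_theta mu lam x" using I_theta_ge_reflection_quadratic False assms by blast
  finally show ?thesis .
qed

lemma I_theta_quotient_min_at_reflection:
  assumes "mu \<noteq> 1/2" "0 < x" "x < 1" "x \<noteq> mu"
  shows "I_theta mu lam (1 - mu) / ((1 - mu) - mu)^2 \<le> I_theta mu lam x / (x - mu)^2"
proof -
  have "0 < (x - mu)^2" using \<open>x \<noteq> mu\<close> by simp
  then show ?thesis using I_theta_quotient_at_reflection I_theta_ge_reflection_quadratic assms
    by (simp add: pos_le_divide_eq)
qed

end

theorem mainTheorem4:
  fixes mu lam :: real
  assumes "0 < mu" "mu < 1" "0 \<le> lam" "lam < 1"
  shows "(\<forall>x. 0 < x \<and> x < 1 \<longrightarrow>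
            I_theta mu lam x \<ge> 2 * ((1 - lam) / (1 + lam)) * (x - mu)^2)
         \<and> (mu \<noteq> 1/2 \<longrightarrow>
            (\<forall>x. 0 < x \<and> x < 1 \<and> x \<noteq> mu \<longrightarrow>
               I_theta mu lam (1 - mu) / ((1 - mu) - mu)^2 \<le> I_theta mu lam x / (x - mu)^2))"
  using I_theta_ge_quadratic[OF assms] I_theta_quotient_min_at_reflection[OF assms] by blast

end
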